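(* Let $d\ge 2$. There exists a constant $c\in(0,1)$ depending only on $d$ such that the following holds for every finite field $\mathbb F_q$ of characteristic greater than two. Let $E,F\subset \mathbb F_q^d$ with $(0,\ldots,0)\notin E$. Then $$|\Pi(E,F)|\ \ge\ c\,\min\left\{ q,\ \frac{|E|\,|F|^2}{q^{2d-1}\sum_{x\in \mathbb F_q^{d}\setminus\{0\}} \sum_{s\in\mathbb F_q^*}E(sx)\, |\widehat{F}(x)|^2}\right\},$$ where the second entry of the minimum is interpreted as $+\infty$ if the double sum in its denominator vanishes and $E$ is nonempty.
   Context: $\mathbb F_q$ is a finite field with $q$ elements and characteristic greater than two; $\mathbb F_q^*=\mathbb F_q\setminus\{0\}$. For $E,F\subset\mathbb F_q^d$, $\Pi(E,F)=\{x\cdot y: x\in E,\ y\in F\}\subset\mathbb F_q$, where $x\cdot y=\sum_i x_iy_i$. A set is identified with its indicator function, so $E(z)=1$ if $z\in E$ and $0$ otherwise. Fix a nontrivial additive character $\psi:\mathbb F_q\to\{u\in\mathbb C:|u|=1\}$; for $f:\mathbb F_q^d\to\mathbb C$ the Fourier transform is $\widehat f(m)=q^{-d}\sum_{x\in\mathbb F_q^d} f(x)\psi(-x\cdot m)$. *)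

theory Defs
  imports "HOL-Analysis.Analysis" "HOL-Algebra.Ring" "HOL-Library.FuncSet"
begin

definition alg_ring_char :: "('a, 'b) ring_scheme \<Rightarrow> nat" where
  "alg_ring_char R = (if \<exists>n::nat>0. [n] \<cdot>\<^bsub>R\<^esub> \<one>\<^bsub>R\<^esub> = \<zero>\<^bsub>R\<^esub>
                  then (LEAST n::nat. n > 0 \<and> [n] \<cdot>\<^bsub>R\<^esub> \<one>\<^bsub>R\<^esub> = \<zero>\<^bsub>R\<^esub>) else 0)"

definition vecs :: "('a, 'b) ring_scheme \<Rightarrow> nat \<Rightarrow> (nat \<Rightarrow> 'a) set" where
  "vecs R d = {..<d} \<rightarrow>\<^sub>E carrier R"

definition zero_vec :: "('a, 'b) ring_scheme \<Rightarrow> nat \<Rightarrow> (nat \<Rightarrow> 'a)" where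
  "zero_vec R d = (\<lambda>i\<in>{..<d}. \<zero>\<^bsub>R\<^esub>)"

definition smult_vec :: "('a, 'b) ring_scheme \<Rightarrow> nat \<Rightarrow> 'a \<Rightarrow> (nat \<Rightarrow> 'a) \<Rightarrow> (nat \<Rightarrow> 'a)" where
  "smult_vec R d s x = (\<lambda>i\<in>{..<d}. s \<otimes>\<^bsub>R\<^esub> x i)"

definition dot :: "('a, 'b) ring_scheme \<Rightarrow> nat \<Rightarrow> (nat \<Rightarrow> 'a) \<Rightarrow> (nat \<Rightarrow> 'a) \<Rightarrow> 'a" where
  "dot R d x y = (\<Oplus>\<^bsub>R\<^esub> i\<in>{..<d}. x i \<otimes>\<^bsub>R\<^esub> y i)"

definition dot_set :: "('a, 'b) ring_scheme \<Rightarrow> nat \<Rightarrow> (nat \<Rightarrow> 'a) set \<Rightarrow> (nat \<Rightarrow> 'a) set \<Rightarrow> 'a set" where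
  "dot_set R d E F = {dot R d x y | x y. x \<in> E \<and> y \<in> F}"

definition nontrivial_add_char :: "('a, 'b) ring_scheme \<Rightarrow> ('a \<Rightarrow> complex) \<Rightarrow> bool" where
  "nontrivial_add_char R \<psi> \<longleftrightarrow>
     (\<forall>a\<in>carrier R. \<forall>b\<in>carrier R. \<psi> (a \<oplus>\<^bsub>R\<^esub> b) = \<psi> a * \<psi> b) \<and>
     (\<forall>a\<in>carrier R. cmod (\<psi> a) = 1) \<and>
     (\<exists>a\<in>carrier R. \<psi> a \<noteq> 1)"

definition fourier :: "('a, 'b) ring_scheme \<Rightarrow> nat \<Rightarrow> ('a \<Rightarrow> complex)
    \<Rightarrow> ((nat \<Rightarrow> 'a) \<Rightarrow> complex) \<Rightarrow> (nat \<Rightarrow> 'a) \<Rightarrow> complex" where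
  "fourier R d \<psi> f m =
     (\<Sum>x\<in>vecs R d. f x * \<psi> (\<ominus>\<^bsub>R\<^esub> dot R d x m)) / of_nat (card (carrier R)) ^ d"

definition ind :: "'c set \<Rightarrow> 'c \<Rightarrow> complex" where
  "ind A z = (if z \<in> A then 1 else 0)"

end

theory Submission
  imports Defs "HOL-Algebra.Multiplicative_Group"
begin

text \<open>
  Write \<open>N = |E| |F|\<close> and let \<open>C\<close> be the number of pairs \<open>((x,y),(x',y'))\<close> in \<open>(E \<times> F)\<^sup>2\<close>
  with \<open>x \<cdot> y = x' \<cdot> y'\<close>. Cauchy--Schwarz over the fibres of the dot product gives
  \<open>N\<^sup>2 \<le> |\<Pi>(E,F)| C\<close>. Detecting equality with the additive character,
  \<open>q C = \<Sum>\<^sub>s |\<Sum>\<^sub>x\<^sub>\<in>\<^sub>E \<Sum>\<^sub>y\<^sub>\<in>\<^sub>F \<psi>(s x \<cdot> y)|\<^sup>2\<close>; the term \<open>s = 0\<close> is \<open>N\<^sup>2\<close>, and for \<open>s \<noteq> 0\<close> the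
  inner sum is \<open>q\<^sup>d \<Sum>\<^sub>x\<^sub>\<in>\<^sub>E \<widehat>F(-s x)\<close>, whose square is at most \<open>q\<^sup>2\<^sup>d |E| \<Sum>\<^sub>x\<^sub>\<in>\<^sub>E |\<widehat>F(-s x)|\<^sup>2\<close>.
  Summing over \<open>s \<noteq> 0\<close> and regrouping by the lines through the origin yields
  \<open>C \<le> N\<^sup>2/q + q\<^sup>2\<^sup>d\<^sup>-\<^sup>1 |E| S\<close>, and the theorem holds with \<open>c = 1/2\<close>.
\<close>

definition collisions :: "('p \<Rightarrow> 'c) \<Rightarrow> 'p set \<Rightarrow> real" where
  "collisions g P = (\<Sum>p\<in>P. \<Sum>p'\<in>P. if g p = g p' then 1 else 0)"

lemma card_squared_le_card_image_mult_collisions: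
  assumes "finite P"
  shows "(real (card P))\<^sup>2 \<le> real (card (g ` P)) * collisions g P"
proof -
  define n where "n t = real (card {p\<in>P. g p = t})" for t
  have "real (card P) = (\<Sum>t\<in>g ` P. \<Sum>p\<in>{x\<in>P. g x = t}. 1)"
    using sum.image_gen[OF assms, of "\<lambda>_. 1::real" g] by simp
  then have card_P: "real (card P) = (\<Sum>t\<in>g ` P. n t)"
    by (simp add: n_def)
  have fibre: "(\<Sum>p'\<in>P. if g p = g p' then 1 else 0) = n (g p)" for p
    using sum.inter_filter[OF assms, of "\<lambda>_. 1::real" "\<lambda>p'. g p = g p'"]
    by (simp add: n_def eq_commute)
  have "collisions g P = (\<Sum>p\<in>P. n (g p))"
    by (simp add: collisions_def fibre)
  also have "\<dots> = (\<Sum>t\<in>g ` P. \<Sum>p\<in>{x\<in>P. g x = t}. n (g p))"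
    using assms by (rule sum.image_gen)
  also have "\<dots> = (\<Sum>t\<in>g ` P. (n t)\<^sup>2)"
    by (rule sum.cong) (auto simp: n_def power2_eq_square)
  finally show ?thesis
    using sum_squared_le_sum_of_squares[of n "g ` P"] by (simp add: card_P mult.commute)
qed

lemma lower_bound_from_energy_inequality:
  fixes X q k e f S :: real
  assumes "q > 0" "k > 0" "e \<ge> 0" "f \<ge> 0" "S \<ge> 0" "X \<ge> 0"
    and energy: "(e * f)\<^sup>2 \<le> X * ((e * f)\<^sup>2 / q + k * e * S)"
  shows "X \<ge> 1/2 * (if S = 0 then (if e \<noteq> 0 \<and> f \<noteq> 0 then q else 0)
                    else min q (e * f ^ 2 / (k * S)))"
proof (cases "e \<noteq> 0 \<and> f \<noteq> 0")
  case False
  then show ?thesis using assms by auto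
next
  case True
  define N where "N = (e * f)\<^sup>2"
  have N: "N > 0" using True by (simp add: N_def)
  show ?thesis
  proof (cases "S = 0")
    case True
    with energy have "N * q \<le> X * N" using \<open>q > 0\<close> by (simp add: N_def field_simps)
    then show ?thesis using True \<open>e \<noteq> 0 \<and> f \<noteq> 0\<close> N \<open>q > 0\<close> by (simp add: mult.commute)
  next
    case False
    then have T: "k * e * S > 0" using True assms by simp
    have N_div: "N / (k * e * S) = e * f ^ 2 / (k * S)"
      using True by (simp add: N_def power2_eq_square)
    show ?thesis
    proof (cases "N / q \<ge> k * e * S")
      case True
      then have "N \<le> X * (2 * (N / q))"
        using energy \<open>X \<ge> 0\<close> unfolding N_def[symmetric] by (smt (verit) mult_left_mono)
      then have "q \<le> 2 * X" using \<open>q > 0\<close> N by (simp add: field_simps)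
      then show ?thesis using \<open>S \<noteq> 0\<close> by simp
    next
      case less: False
      then have "N \<le> X * (2 * (k * e * S))"
        using energy \<open>X \<ge> 0\<close> unfolding N_def[symmetric] by (smt (verit) mult_left_mono)
      then have "N / (k * e * S) \<le> 2 * X" using T by (simp add: field_simps)
      then show ?thesis using \<open>S \<noteq> 0\<close> N_div by simp
    qed
  qed
qed

context ring
begin

lemma add_char_zero:
  assumes "nontrivial_add_char R \<psi>"
  shows "\<psi> \<zero> = 1"
proof -
  have "\<psi> \<zero> = \<psi> \<zero> * \<psi> \<zero>" and "cmod (\<psi> \<zero>) = 1"
    using assms unfolding nontrivial_add_char_def by (metis l_zero zero_closed)+
  then show ?thesis by (metis mult_cancel_right1 norm_zero zero_neq_one)
qed

lemma add_char_uminus: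
  assumes "nontrivial_add_char R \<psi>" "a \<in> carrier R"
  shows "\<psi> (\<ominus> a) = cnj (\<psi> a)"
proof -
  have "\<psi> a * \<psi> (\<ominus> a) = 1"
    using assms add_char_zero[OF assms(1)] unfolding nontrivial_add_char_def
    by (metis a_inv_closed r_neg)
  moreover have "\<psi> a * cnj (\<psi> a) = 1"
    using assms unfolding nontrivial_add_char_def
    by (metis complex_norm_square mult.commute of_real_1 one_power2 complex_mult_cnj)
  ultimately show ?thesis
    by (metis mult.left_commute mult.right_neutral mult.commute)
qed

lemma add_char_sum_eq_0:
  assumes "nontrivial_add_char R \<psi>" "finite (carrier R)"
  shows "(\<Sum>s\<in>carrier R. \<psi> s) = 0"
proof -
  obtain b where b: "b \<in> carrier R" "\<psi> b \<noteq> 1"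
    using assms unfolding nontrivial_add_char_def by auto
  have "(\<Sum>s\<in>carrier R. \<psi> s) = (\<Sum>s\<in>carrier R. \<psi> (b \<oplus> s))"
    by (rule sum.reindex_bij_witness[where j="\<lambda>s. \<ominus> b \<oplus> s" and i="\<lambda>s. b \<oplus> s"])
       (use b in \<open>auto simp: a_assoc[symmetric] l_neg r_neg\<close>)
  also have "\<dots> = \<psi> b * (\<Sum>s\<in>carrier R. \<psi> s)"
    using assms b unfolding nontrivial_add_char_def by (simp add: sum_distrib_left)
  finally have "(1 - \<psi> b) * (\<Sum>s\<in>carrier R. \<psi> s) = 0" by (simp add: algebra_simps)
  with b show ?thesis by simp
qed

end

context field
begin

lemma add_char_sum_mult:
  assumes "nontrivial_add_char R \<psi>" "finite (carrier R)" "a \<in> carrier R"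
  shows "(\<Sum>s\<in>carrier R. \<psi> (s \<otimes> a)) = (if a = \<zero> then of_nat (card (carrier R)) else 0)"
proof (cases "a = \<zero>")
  case True
  then show ?thesis using add_char_zero[OF assms(1)] by simp
next
  case False
  then have a: "a \<in> Units R" using assms field_Units by auto
  have "(\<Sum>s\<in>carrier R. \<psi> (s \<otimes> a)) = (\<Sum>s\<in>carrier R. \<psi> s)"
    by (rule sum.reindex_bij_witness[where i="\<lambda>s. s \<otimes> inv a" and j="\<lambda>s. s \<otimes> a"])
       (use a assms(3) in \<open>auto simp: m_assoc\<close>)
  then show ?thesis using add_char_sum_eq_0[OF assms(1,2)] False by simp
qed

lemma add_char_orthogonality:
  assumes "nontrivial_add_char R \<psi>" "finite (carrier R)" "a \<in> carrier R" "b \<in> carrier R"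
  shows "(if a = b then 1 else 0) =
    (\<Sum>s\<in>carrier R. \<psi> (s \<otimes> a) * cnj (\<psi> (s \<otimes> b))) / of_nat (card (carrier R))"
proof -
  have "card (carrier R) > 0" using assms(2) by (auto simp: card_gt_0_iff)
  moreover have "\<psi> (s \<otimes> a) * cnj (\<psi> (s \<otimes> b)) = \<psi> (s \<otimes> (a \<ominus> b))" if s: "s \<in> carrier R" for s
  proof -
    have "\<psi> (s \<otimes> a) * cnj (\<psi> (s \<otimes> b)) = \<psi> (s \<otimes> a \<oplus> \<ominus> (s \<otimes> b))"
      using assms s unfolding add_char_uminus[OF assms(1) m_closed[OF s assms(4)], symmetric]
      by (simp add: nontrivial_add_char_def)
    also have "s \<otimes> a \<oplus> \<ominus> (s \<otimes> b) = s \<otimes> (a \<ominus> b)"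
      using s assms by (simp add: minus_eq r_distr r_minus)
    finally show ?thesis .
  qed
  then have "(\<Sum>s\<in>carrier R. \<psi> (s \<otimes> a) * cnj (\<psi> (s \<otimes> b)))
      = (if a = b then of_nat (card (carrier R)) else 0)"
    using add_char_sum_mult[OF assms(1,2), of "a \<ominus> b"] assms by (simp cong: sum.cong)
  ultimately show ?thesis by simp
qed

lemma collisions_eq_add_char_sum:
  assumes psi: "nontrivial_add_char R \<psi>" and fin: "finite (carrier R)"
    and g: "g ` P \<subseteq> carrier R" and "finite P"
  shows "collisions g P =
    (\<Sum>s\<in>carrier R. (cmod (\<Sum>p\<in>P. \<psi> (s \<otimes> g p)))\<^sup>2) / real (card (carrier R))"
proof -
  let ?q = "of_nat (card (carrier R)) :: complex"
  have delta: "(if g p = g p' then 1 else 0) =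
      (\<Sum>s\<in>carrier R. \<psi> (s \<otimes> g p) * cnj (\<psi> (s \<otimes> g p'))) / ?q"
    if "p \<in> P" "p' \<in> P" for p p'
    using that g by (intro add_char_orthogonality[OF psi fin]) auto
  have "complex_of_real (collisions g P)
     = (\<Sum>p\<in>P. \<Sum>p'\<in>P. (\<Sum>s\<in>carrier R. \<psi> (s \<otimes> g p) * cnj (\<psi> (s \<otimes> g p'))) / ?q)"
    unfolding collisions_def of_real_sum
    unfolding if_distrib[of complex_of_real] of_real_1 of_real_0 using delta by simp
  also have "\<dots> = (\<Sum>s\<in>carrier R. (\<Sum>p\<in>P. \<psi> (s \<otimes> g p)) * cnj (\<Sum>p\<in>P. \<psi> (s \<otimes> g p))) / ?q"
    unfolding sum_divide_distrib[symmetric] cnj_sum sum_product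
    by (subst sum.swap) (simp add: sum.swap[of _ P "carrier R"])
  also have "\<dots> = of_real ((\<Sum>s\<in>carrier R. (cmod (\<Sum>p\<in>P. \<psi> (s \<otimes> g p)))\<^sup>2) / real (card (carrier R)))"
    unfolding of_real_divide of_real_sum complex_norm_square by simp
  finally show ?thesis using of_real_eq_iff by blast
qed

end

context cring
begin

lemma finite_vecs: "finite (carrier R) \<Longrightarrow> finite (vecs R d)"
  unfolding vecs_def by (simp add: finite_PiE)

lemma smult_vec_closed: "c \<in> carrier R \<Longrightarrow> x \<in> vecs R d \<Longrightarrow> smult_vec R d c x \<in> vecs R d"
  unfolding smult_vec_def vecs_def by auto

lemma smult_vec_smult_vec:
  "a \<in> carrier R \<Longrightarrow> b \<in> carrier R \<Longrightarrow> x \<in> vecs R d \<Longrightarrow>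
   smult_vec R d a (smult_vec R d b x) = smult_vec R d (a \<otimes> b) x"
  unfolding smult_vec_def vecs_def by (auto simp: m_assoc PiE_iff)

lemma smult_vec_one: "x \<in> vecs R d \<Longrightarrow> smult_vec R d \<one> x = x"
  unfolding smult_vec_def vecs_def by (auto simp: PiE_iff extensional_def)

lemma smult_vec_zero_vec: "a \<in> carrier R \<Longrightarrow> smult_vec R d a (zero_vec R d) = zero_vec R d"
  unfolding smult_vec_def zero_vec_def by auto

lemma dot_closed: "x \<in> vecs R d \<Longrightarrow> y \<in> vecs R d \<Longrightarrow> dot R d x y \<in> carrier R"
  unfolding dot_def vecs_def by (auto intro!: finsum_closed simp: PiE_iff)

lemma dot_smult_vec_right:
  assumes "c \<in> carrier R" "x \<in> vecs R d" "y \<in> vecs R d"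
  shows "dot R d y (smult_vec R d c x) = c \<otimes> dot R d x y"
proof -
  have "dot R d y (smult_vec R d c x) = (\<Oplus>i\<in>{..<d}. c \<otimes> (x i \<otimes> y i))"
    unfolding dot_def smult_vec_def using assms unfolding vecs_def
    by (auto intro!: finsum_cong simp: PiE_iff m_lcomm m_comm)
  also have "\<dots> = c \<otimes> dot R d x y"
    unfolding dot_def using assms unfolding vecs_def
    by (subst finsum_rdistr) (auto simp: PiE_iff)
  finally show ?thesis .
qed

end

definition dilate_energy ::
    "('a, 'b) ring_scheme \<Rightarrow> nat \<Rightarrow> ('a \<Rightarrow> complex) \<Rightarrow> (nat \<Rightarrow> 'a) set \<Rightarrow> (nat \<Rightarrow> 'a) set \<Rightarrow> real" where
  "dilate_energy R d \<psi> E F = (\<Sum>x\<in>vecs R d - {zero_vec R d}. \<Sum>s\<in>carrier R - {\<zero>\<^bsub>R\<^esub>}.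
     Re (ind E (smult_vec R d s x)) * (cmod (fourier R d \<psi> (ind F) x))\<^sup>2)"

context field
begin

lemma smult_vec_inv_cancel:
  assumes "t \<in> carrier R - {\<zero>}" "x \<in> vecs R d"
  shows "smult_vec R d (inv t) (smult_vec R d t x) = x"
    and "smult_vec R d t (smult_vec R d (inv t) x) = x"
  using assms field_Units by (auto simp: smult_vec_smult_vec smult_vec_one)

lemma add_char_sum_dot_eq_fourier:
  assumes psi: "nontrivial_add_char R \<psi>" and fin: "finite (carrier R)"
    and F: "F \<subseteq> vecs R d" and s: "s \<in> carrier R" and x: "x \<in> vecs R d"
  shows "(\<Sum>y\<in>F. \<psi> (s \<otimes> dot R d x y)) =
     of_nat (card (carrier R)) ^ d * fourier R d \<psi> (ind F) (smult_vec R d (\<ominus> s) x)"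
proof -
  have "card (carrier R) > 0" using fin by (auto simp: card_gt_0_iff)
  moreover have "\<ominus> dot R d y (smult_vec R d (\<ominus> s) x) = s \<otimes> dot R d x y" if "y \<in> F" for y
    using that F s x by (simp add: dot_smult_vec_right dot_closed subsetD l_minus)
  ultimately show ?thesis
    using F unfolding fourier_def ind_def
    by (simp add: if_distrib[of "\<lambda>c. c * _"] sum.If_cases[OF finite_vecs[OF fin]] Int_absorb1
        cong: sum.cong)
qed

lemma sum_line_indicator_eq_sum_dilates:
  assumes fin: "finite (carrier R)" and E: "E \<subseteq> vecs R d" "zero_vec R d \<notin> E"
    and t: "t \<in> carrier R - {\<zero>}"
  shows "(\<Sum>m\<in>vecs R d - {zero_vec R d}. Re (ind E (smult_vec R d t m)) * f m) =
    (\<Sum>x\<in>E. f (smult_vec R d (inv t) x))"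
proof -
  have inv_t: "inv t \<in> carrier R - {\<zero>}" using t field_Units by auto
  have "(\<Sum>m\<in>vecs R d - {zero_vec R d}. Re (ind E (smult_vec R d t m)) * f m)
      = (\<Sum>m\<in>{m \<in> vecs R d - {zero_vec R d}. smult_vec R d t m \<in> E}. f m)"
    using finite_vecs[OF fin] by (subst sum.inter_filter) (auto simp: ind_def intro!: sum.cong split: if_splits)
  also have "\<dots> = (\<Sum>x\<in>E. f (smult_vec R d (inv t) x))"
  proof (rule sym, rule sum.reindex_bij_witness[where i="smult_vec R d t" and j="smult_vec R d (inv t)"])
    fix x assume x: "x \<in> E"
    then have xV: "x \<in> vecs R d" using E by auto
    show "smult_vec R d t (smult_vec R d (inv t) x) = x"
      using smult_vec_inv_cancel(2)[OF t xV] .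
    have "smult_vec R d (inv t) x \<noteq> zero_vec R d"
      using x E(2) smult_vec_inv_cancel(2)[OF t xV] smult_vec_zero_vec t by force
    then show "smult_vec R d (inv t) x \<in> {m \<in> vecs R d - {zero_vec R d}. smult_vec R d t m \<in> E}"
      using x xV inv_t smult_vec_inv_cancel(2)[OF t xV] smult_vec_closed by simp
  next
    fix m assume "m \<in> {m \<in> vecs R d - {zero_vec R d}. smult_vec R d t m \<in> E}"
    then show "smult_vec R d (inv t) (smult_vec R d t m) = m" "smult_vec R d t m \<in> E"
      using smult_vec_inv_cancel(1)[OF t] by auto
  qed simp
  finally show ?thesis .
qed

lemma sum_dilates_eq_sum_lines:
  assumes fin: "finite (carrier R)" and E: "E \<subseteq> vecs R d" "zero_vec R d \<notin> E"
  shows "(\<Sum>s\<in>carrier R - {\<zero>}. \<Sum>x\<in>E. f (smult_vec R d (\<ominus> s) x)) =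
    (\<Sum>m\<in>vecs R d - {zero_vec R d}. \<Sum>t\<in>carrier R - {\<zero>}. Re (ind E (smult_vec R d t m)) * f m)"
proof -
  have "(\<Sum>s\<in>carrier R - {\<zero>}. \<Sum>x\<in>E. f (smult_vec R d (\<ominus> s) x)) =
      (\<Sum>t\<in>carrier R - {\<zero>}. \<Sum>x\<in>E. f (smult_vec R d (inv t) x))"
  proof (rule sum.reindex_bij_witness[where i="\<lambda>t. \<ominus> (inv t)" and j="\<lambda>s. inv (\<ominus> s)"])
    fix s assume "s \<in> carrier R - {\<zero>}"
    then have "\<ominus> s \<in> Units R" using field_Units by auto
    moreover have "\<ominus> (\<ominus> s) = s" using \<open>s \<in> carrier R - {\<zero>}\<close> by simp
    ultimately show "\<ominus> (inv (inv (\<ominus> s))) = s" "inv (\<ominus> s) \<in> carrier R - {\<zero>}"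
      "(\<Sum>x\<in>E. f (smult_vec R d (inv (inv (\<ominus> s))) x)) = (\<Sum>x\<in>E. f (smult_vec R d (\<ominus> s) x))"
      by (simp_all only: Units_inv_inv Units_inv_Units field_Units[symmetric])
  next
    fix t assume "t \<in> carrier R - {\<zero>}"
    then have "t \<in> Units R" using field_Units by auto
    then have "inv t \<in> carrier R - {\<zero>}" using field_Units by blast
    then show "inv (\<ominus> (\<ominus> (inv t))) = t" "\<ominus> (inv t) \<in> carrier R - {\<zero>}"
      using \<open>t \<in> Units R\<close> by (simp_all add: Units_inv_inv)
  qed
  also have "\<dots> = (\<Sum>t\<in>carrier R - {\<zero>}. \<Sum>m\<in>vecs R d - {zero_vec R d}. Re (ind E (smult_vec R d t m)) * f m)"
    using sum_line_indicator_eq_sum_dilates[OF assms] by simp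
  also have "\<dots> = (\<Sum>m\<in>vecs R d - {zero_vec R d}. \<Sum>t\<in>carrier R - {\<zero>}. Re (ind E (smult_vec R d t m)) * f m)"
    by (rule sum.swap)
  finally show ?thesis .
qed

lemma norm_add_char_sum_dot_le:
  assumes psi: "nontrivial_add_char R \<psi>" and fin: "finite (carrier R)"
    and E: "E \<subseteq> vecs R d" and F: "F \<subseteq> vecs R d" and s: "s \<in> carrier R"
  defines "q \<equiv> real (card (carrier R))"
  shows "(cmod (\<Sum>(x, y)\<in>E \<times> F. \<psi> (s \<otimes> dot R d x y)))\<^sup>2 \<le>
    q ^ (2 * d) * real (card E) * (\<Sum>x\<in>E. (cmod (fourier R d \<psi> (ind F) (smult_vec R d (\<ominus> s) x)))\<^sup>2)"
proof -
  let ?a = "\<lambda>x. cmod (fourier R d \<psi> (ind F) (smult_vec R d (\<ominus> s) x))"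
  have "(\<Sum>(x, y)\<in>E \<times> F. \<psi> (s \<otimes> dot R d x y))
      = of_real (q ^ d) * (\<Sum>x\<in>E. fourier R d \<psi> (ind F) (smult_vec R d (\<ominus> s) x))"
    using add_char_sum_dot_eq_fourier[OF psi fin F s] E
    by (simp add: sum.cartesian_product[symmetric] sum_distrib_left q_def subset_iff)
  then have "cmod (\<Sum>(x, y)\<in>E \<times> F. \<psi> (s \<otimes> dot R d x y))
      = q ^ d * cmod (\<Sum>x\<in>E. fourier R d \<psi> (ind F) (smult_vec R d (\<ominus> s) x))"
    by (simp add: norm_mult norm_power q_def)
  also have "\<dots> \<le> q ^ d * (\<Sum>x\<in>E. ?a x)"
    by (intro mult_left_mono norm_sum) (simp add: q_def)
  finally have "cmod (\<Sum>(x, y)\<in>E \<times> F. \<psi> (s \<otimes> dot R d x y)) \<le> q ^ d * (\<Sum>x\<in>E. ?a x)" .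
  then have "(cmod (\<Sum>(x, y)\<in>E \<times> F. \<psi> (s \<otimes> dot R d x y)))\<^sup>2 \<le> (q ^ d)\<^sup>2 * (\<Sum>x\<in>E. ?a x)\<^sup>2"
    by (simp add: power_mono power_mult_distrib[symmetric])
  also have "\<dots> \<le> (q ^ d)\<^sup>2 * (real (card E) * (\<Sum>x\<in>E. (?a x)\<^sup>2))"
    using sum_squared_le_sum_of_squares[of ?a E] by (simp add: mult_left_mono mult.commute)
  finally show ?thesis by (simp add: power_mult[symmetric] mult.commute mult.left_commute)
qed

lemma collisions_dot_le:
  assumes psi: "nontrivial_add_char R \<psi>" and fin: "finite (carrier R)"
    and E: "E \<subseteq> vecs R d" "zero_vec R d \<notin> E" and F: "F \<subseteq> vecs R d" and "d \<ge> 1"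
  defines "q \<equiv> real (card (carrier R))"
  shows "collisions (case_prod (dot R d)) (E \<times> F) \<le>
    (real (card E) * real (card F))\<^sup>2 / q + q ^ (2 * d - 1) * real (card E) * dilate_energy R d \<psi> E F"
proof -
  let ?A = "\<lambda>s. (\<Sum>(x, y)\<in>E \<times> F. \<psi> (s \<otimes> dot R d x y))"
  let ?f = "\<lambda>m. (cmod (fourier R d \<psi> (ind F) m))\<^sup>2"
  have finE: "finite E" and finF: "finite F"
    using finite_vecs[OF fin] E F finite_subset by blast+
  have q: "q > 0" using fin by (auto simp: q_def card_gt_0_iff)
  have "?A \<zero> = (\<Sum>p\<in>E \<times> F. 1)"
    using add_char_zero[OF psi] E F by (intro sum.cong) (auto simp: subset_iff dot_closed)
  then have A_zero: "?A \<zero> = of_real (real (card E) * real (card F))"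
    by (simp add: card_cartesian_product)
  have C: "collisions (case_prod (dot R d)) (E \<times> F) = (\<Sum>s\<in>carrier R. (cmod (?A s))\<^sup>2) / q"
    unfolding q_def using E F finE finF
    by (subst collisions_eq_add_char_sum[OF psi fin]) (auto simp: dot_closed subset_iff case_prod_beta)
  have "(\<Sum>s\<in>carrier R. (cmod (?A s))\<^sup>2) = (cmod (?A \<zero>))\<^sup>2 + (\<Sum>s\<in>carrier R - {\<zero>}. (cmod (?A s))\<^sup>2)"
    using fin by (rule sum.remove) simp
  also have "\<dots> \<le> (real (card E) * real (card F))\<^sup>2 +
      (\<Sum>s\<in>carrier R - {\<zero>}. q ^ (2 * d) * real (card E) * (\<Sum>x\<in>E. ?f (smult_vec R d (\<ominus> s) x)))"
    unfolding A_zero q_def using norm_add_char_sum_dot_le[OF psi fin E(1) F]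
    by (intro add_mono sum_mono) (auto simp: norm_mult)
  also have "\<dots> = (real (card E) * real (card F))\<^sup>2 + q * (q ^ (2 * d - 1) * real (card E) * dilate_energy R d \<psi> E F)"
    using \<open>d \<ge> 1\<close> sum_dilates_eq_sum_lines[OF fin E, of ?f]
    by (simp add: dilate_energy_def sum_distrib_left[symmetric] power_eq_if)
  finally show ?thesis
    unfolding C using q by (simp add: field_simps)
qed

end

lemma image_dot_eq_dot_set: "case_prod (dot R d) ` (E \<times> F) = dot_set R d E F"
  unfolding dot_set_def by auto

lemma (in field) card_dot_set_lower_bound:
  assumes fin: "finite (carrier R)" and psi: "nontrivial_add_char R \<psi>"
    and E: "E \<subseteq> vecs R d" "zero_vec R d \<notin> E" and F: "F \<subseteq> vecs R d" and "d \<ge> 1"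
  defines "q \<equiv> real (card (carrier R))" and "S \<equiv> dilate_energy R d \<psi> E F"
  shows "real (card (dot_set R d E F)) \<ge> 1/2 *
    (if S = 0 then (if E \<noteq> {} \<and> F \<noteq> {} then q else 0)
     else min q (real (card E) * real (card F) ^ 2 / (q ^ (2 * d - 1) * S)))"
proof -
  have "finite E" "finite F" using finite_vecs[OF fin] E F finite_subset by blast+
  let ?N = "real (card E) * real (card F)"
  have "?N\<^sup>2 \<le> real (card (dot_set R d E F)) * collisions (case_prod (dot R d)) (E \<times> F)"
    using card_squared_le_card_image_mult_collisions[of "E \<times> F" "case_prod (dot R d)"] \<open>finite E\<close> \<open>finite F\<close>
    by (simp add: image_dot_eq_dot_set card_cartesian_product)
  also have "\<dots> \<le> real (card (dot_set R d E F)) * (?N\<^sup>2 / q + q ^ (2 * d - 1) * real (card E) * S)"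
    unfolding q_def S_def using collisions_dot_le[OF psi fin E F \<open>d \<ge> 1\<close>] by (intro mult_left_mono) auto
  finally have bound: "real (card (dot_set R d E F)) \<ge> 1/2 *
      (if S = 0 then (if real (card E) \<noteq> 0 \<and> real (card F) \<noteq> 0 then q else 0)
       else min q (real (card E) * real (card F) ^ 2 / (q ^ (2 * d - 1) * S)))"
    using fin by (intro lower_bound_from_energy_inequality)
      (auto simp: q_def S_def card_gt_0_iff dilate_energy_def ind_def intro!: sum_nonneg)
  have "(E \<noteq> {} \<and> F \<noteq> {}) = (real (card E) \<noteq> 0 \<and> real (card F) \<noteq> 0)"
    using \<open>finite E\<close> \<open>finite F\<close> by simp
  with bound show ?thesis by (simp only:)
qed

theorem lemma2p1:
  fixes d :: nat
  assumes "d \<ge> 2"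
  shows "\<exists>c::real. 0 < c \<and> c < 1 \<and>
    (\<forall>(R :: ('a, 'b) ring_scheme) (\<psi> :: 'a \<Rightarrow> complex) E F.
       field R \<and> finite (carrier R) \<and> alg_ring_char R > 2 \<and>
       nontrivial_add_char R \<psi> \<and>
       E \<subseteq> vecs R d \<and> F \<subseteq> vecs R d \<and> zero_vec R d \<notin> E \<longrightarrow>
       (let q = real (card (carrier R));
            S = (\<Sum>x\<in>vecs R d - {zero_vec R d}. \<Sum>s\<in>carrier R - {\<zero>\<^bsub>R\<^esub>}.
                   Re (ind E (smult_vec R d s x)) * (cmod (fourier R d \<psi> (ind F) x))\<^sup>2)
        in real (card (dot_set R d E F)) \<ge>
             c * (if S = 0 then (if E \<noteq> {} \<and> F \<noteq> {} then q else 0)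
                  else min q (real (card E) * real (card F) ^ 2 / (q ^ (2 * d - 1) * S)))))"
  by (intro exI[of _ "1/2"] conjI allI impI; (unfold Let_def, elim conjE)?;
      (rule field.card_dot_set_lower_bound[unfolded dilate_energy_def])?) (use assms in auto)

end
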